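(* The class PosLimSup is closed under $\min$, and the class AsLimInf is closed under $\max$.
   Context: A probabilistic weighted automaton over a finite alphabet $\Sigma$ is a tuple $A=(Q,\rho_I,\Sigma,\delta,\gamma)$ where $Q$ is a finite set of states, $\rho_I$ is a probability distribution on $Q$, $\delta:Q\times\Sigma\to\mathcal D(Q)$ assigns to each state and letter a probability distribution on $Q$, and $\gamma:Q\times\Sigma\times Q\to\mathbb Q$ is a weight function. A run over an infinite word $w=\sigma_1\sigma_2\dots$ is a sequence $r=q_0\sigma_1q_1\sigma_2\dots$ with $\rho_I(q_0)>0$ and $\delta(q_i,\sigma_{i+1})(q_{i+1})>0$ for all $i$; its weight sequence is $\gamma(r)=v_0v_1\dots$ with $v_i=\gamma(q_i,\sigma_{i+1},q_{i+1})$. For each $w$, the probabilities of finite run prefixes induce a probability measure $\mathbb P^A$ on runs over $w$. For a value function $\mathrm{Val}$, positive semantics: $L^{>0}_A(w)=\sup\{\eta\mid \mathbb P^A(\{r:\mathrm{Val}(\gamma(r))\ge\eta\})>0\}$; almost-sure semantics: $L^{=1}_A(w)=\sup\{\eta\mid \mathbb P^A(\{r:\mathrm{Val}(\gamma(r))\ge\eta\})=1\}$. $\mathsf{LimSup}(v)=\limsup_n v_n$, $\mathsf{LimInf}(v)=\liminf_n v_n$. PosLimSup is the class of $\mathsf{LimSup}$-automata under positive semantics; AsLimInf is the class of $\mathsf{LimInf}$-automata under almost-sure semantics. A class $\mathcal C$ is closed under $\max$ (resp. $\min$) if for any $A_1,A_2\in\mathcal C$ over the same alphabet there is $A\in\mathcal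 C$ with $L_A(w)=\max\{L_{A_1}(w),L_{A_2}(w)\}$ (resp. $\min$) for all words $w$. *)

theory Defs
  imports "HOL-Probability.Probability"
begin

text \<open>States are natural numbers drawn from a finite set Q (so that automata with different
 numbers of states can be quantified over uniformly).  An infinite word
 sigma_1 sigma_2 ... is a function w :: nat => 'a with w i = sigma_(i+1); a run
 q_0 q_1 ... is a function r :: nat => nat with r i = q_i.\<close>

record 'a pwa =
  states :: "nat set"
  init   :: "nat pmf"
  trans  :: "nat \<Rightarrow> 'a \<Rightarrow> nat pmf"
  wt     :: "nat \<Rightarrow> 'a \<Rightarrow> nat \<Rightarrow> rat"

definition wf_pwa :: "'a pwa \<Rightarrow> bool" where
  "wf_pwa A \<longleftrightarrow> finite (states A) \<and> set_pmf (init A) \<subseteq> states A \<and>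
     (\<forall>q\<in>states A. \<forall>a. set_pmf (trans A q a) \<subseteq> states A)"

definition run_prob :: "'a pwa \<Rightarrow> (nat \<Rightarrow> 'a) \<Rightarrow> (nat \<Rightarrow> nat) measure" where
  "run_prob A w = (SOME M. prob_space M \<and>
      sets M = sets (PiM (UNIV::nat set) (\<lambda>_. count_space (UNIV::nat set))) \<and>
      (\<forall>n qs. measure M {r. \<forall>i\<le>n. r i = qs i} =
         pmf (init A) (qs 0) * (\<Prod>i<n. pmf (trans A (qs i) (w i)) (qs (Suc i)))))"

definition wseq :: "'a pwa \<Rightarrow> (nat \<Rightarrow> 'a) \<Rightarrow> (nat \<Rightarrow> nat) \<Rightarrow> nat \<Rightarrow> rat" where
  "wseq A w r n = wt A (r n) (w n) (r (Suc n))"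

definition LimSupV :: "(nat \<Rightarrow> rat) \<Rightarrow> ereal" where
  "LimSupV v = limsup (\<lambda>n. ereal (real_of_rat (v n)))"

definition LimInfV :: "(nat \<Rightarrow> rat) \<Rightarrow> ereal" where
  "LimInfV v = liminf (\<lambda>n. ereal (real_of_rat (v n)))"

definition L_pos :: "((nat \<Rightarrow> rat) \<Rightarrow> ereal) \<Rightarrow> 'a pwa \<Rightarrow> (nat \<Rightarrow> 'a) \<Rightarrow> ereal" where
  "L_pos Val A w = Sup {ereal \<eta> | \<eta>.
      measure (run_prob A w) {r. Val (wseq A w r) \<ge> ereal \<eta>} > 0}"

definition L_as :: "((nat \<Rightarrow> rat) \<Rightarrow> ereal) \<Rightarrow> 'a pwa \<Rightarrow> (nat \<Rightarrow> 'a) \<Rightarrow> ereal" where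
  "L_as Val A w = Sup {ereal \<eta> | \<eta>.
      measure (run_prob A w) {r. Val (wseq A w r) \<ge> ereal \<eta>} = 1}"

end

theory Submission
  imports Defs
begin

text \<open>Run the two automata independently in a product automaton. Besides the two states, the
  product remembers the set of weight thresholds that the first automaton has reached since the
  second one last reached them; whenever the second automaton reaches a pending threshold, the
  product emits the largest such threshold. Since there are only finitely many weights, the
  product's weights reach a level infinitely often iff the weights of both components do, so its
  LimSup is the minimum of the two LimSups. By independence, the probability that this LimSup is
  at least \<open>\<eta>\<close> is the product of the two component probabilities, which is positive iff both
  are; this gives the minimum for the positive semantics. Negating all weights turns the same
  construction into the maximum of the LimInfs, and the event fails for the product with
  probability \<open>(1 - p\<^sub>1)(1 - p\<^sub>2)\<close>, which vanishes iff \<open>p\<^sub>1 = 1\<close> or \<open>p\<^sub>2 = 1\<close>; this gives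
  the maximum for the almost-sure semantics.\<close>

subsection \<open>Markov chains on the natural numbers\<close>

definition run_space :: "(nat \<Rightarrow> nat) measure" where
  "run_space = PiM UNIV (\<lambda>_. count_space UNIV)"

definition cylinder :: "nat \<Rightarrow> (nat \<Rightarrow> nat) \<Rightarrow> (nat \<Rightarrow> nat) set" where
  "cylinder n qs = {r. \<forall>i\<le>n. r i = qs i}"

definition cylinder_prob :: "nat pmf \<Rightarrow> (nat \<Rightarrow> nat \<Rightarrow> nat pmf) \<Rightarrow> nat \<Rightarrow> (nat \<Rightarrow> nat) \<Rightarrow> real" where
  "cylinder_prob p K n qs = pmf p (qs 0) * (\<Prod>i<n. pmf (K i (qs i)) (qs (Suc i)))"

definition chain_measure :: "nat pmf \<Rightarrow> (nat \<Rightarrow> nat \<Rightarrow> nat pmf) \<Rightarrow> (nat \<Rightarrow> nat) measure \<Rightarrow> bool" where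
  "chain_measure p K M \<longleftrightarrow> prob_space M \<and> sets M = sets run_space \<and>
     (\<forall>n qs. measure M (cylinder n qs) = cylinder_prob p K n qs)"

abbreviation word_kernel :: "'a pwa \<Rightarrow> (nat \<Rightarrow> 'a) \<Rightarrow> nat \<Rightarrow> nat \<Rightarrow> nat pmf" where
  "word_kernel A w \<equiv> \<lambda>i q. trans A q (w i)"

lemma space_run_space [simp]: "space run_space = UNIV"
  by (simp add: run_space_def space_PiM PiE_UNIV_domain)

lemma cylinder_in_sets [measurable]: "cylinder n qs \<in> sets run_space"
proof -
  have "cylinder n qs = {r\<in>space run_space. \<forall>i\<in>{..n}. r i = qs i}"
    by (auto simp: cylinder_def)
  also have "\<dots> \<in> sets run_space"
    unfolding run_space_def by measurable
  finally show ?thesis .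
qed

lemma measurable_run_coordinate: "(\<lambda>r. r n) \<in> run_space \<rightarrow>\<^sub>M count_space UNIV"
  unfolding run_space_def using measurable_component_singleton[of n UNIV "\<lambda>_. count_space UNIV"] by simp

lemma measurable_into_run_space:
  "(\<And>n. (\<lambda>x. f x n) \<in> M \<rightarrow>\<^sub>M count_space UNIV) \<Longrightarrow> f \<in> M \<rightarrow>\<^sub>M run_space"
  unfolding run_space_def by (rule measurable_PiM_single') auto

lemma cylinder_prob_Suc:
  "cylinder_prob p K (Suc n) qs = cylinder_prob p K n qs * pmf (K n (qs n)) (qs (Suc n))"
  by (simp add: cylinder_prob_def)

lemma cylinder_prob_cong:
  "(\<And>i. i \<le> n \<Longrightarrow> qs i = qs' i) \<Longrightarrow> cylinder_prob p K n qs = cylinder_prob p K n qs'"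
  unfolding cylinder_prob_def by (intro arg_cong2[where f="(*)"] prod.cong) auto

text \<open>Existence: choose independently, for every time \<open>i\<close> and state \<open>q\<close>, a successor
  according to \<open>K i q\<close> (and an initial state according to \<open>p\<close>, at index \<open>None\<close>); the
  chain then follows these choices.\<close>

definition choice_pmf :: "nat pmf \<Rightarrow> (nat \<Rightarrow> nat \<Rightarrow> nat pmf) \<Rightarrow> (nat \<times> nat) option \<Rightarrow> nat pmf" where
  "choice_pmf p K j = (case j of None \<Rightarrow> p | Some (i, q) \<Rightarrow> K i q)"

definition choice_space :: "nat pmf \<Rightarrow> (nat \<Rightarrow> nat \<Rightarrow> nat pmf) \<Rightarrow> ((nat \<times> nat) option \<Rightarrow> nat) measure" where
  "choice_space p K = PiM UNIV (\<lambda>j. measure_pmf (choice_pmf p K j))"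

primrec chain_of_choices :: "((nat \<times> nat) option \<Rightarrow> nat) \<Rightarrow> nat \<Rightarrow> nat" where
  "chain_of_choices \<omega> 0 = \<omega> None"
| "chain_of_choices \<omega> (Suc n) = \<omega> (Some (n, chain_of_choices \<omega> n))"

lemma space_choice_space [simp]: "space (choice_space p K) = UNIV"
  by (simp add: choice_space_def space_PiM PiE_UNIV_domain)

lemma prob_space_choice_space: "prob_space (choice_space p K)"
  unfolding choice_space_def by (intro prob_space_PiM) (auto intro: prob_space_measure_pmf)

lemma measurable_choice: "(\<lambda>\<omega>. \<omega> j) \<in> choice_space p K \<rightarrow>\<^sub>M count_space UNIV"
proof -
  have "(\<lambda>\<omega>. \<omega> j) \<in> choice_space p K \<rightarrow>\<^sub>M measure_pmf (choice_pmf p K j)"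
    unfolding choice_space_def by (rule measurable_component_singleton) simp
  then show ?thesis by (simp add: measurable_cong_sets)
qed

lemma measurable_chain_of_choices_at:
  "(\<lambda>\<omega>. chain_of_choices \<omega> n) \<in> choice_space p K \<rightarrow>\<^sub>M count_space UNIV"
proof (induction n)
  case 0
  then show ?case by (simp add: measurable_choice)
next
  case (Suc n)
  have "(\<lambda>\<omega>. (\<lambda>q \<omega>. \<omega> (Some (n, q))) (chain_of_choices \<omega> n) \<omega>) \<in> choice_space p K \<rightarrow>\<^sub>M count_space UNIV"
    by (rule measurable_compose_countable'[OF measurable_choice Suc]) simp
  then show ?case by simp
qed

lemma measurable_chain_of_choices: "chain_of_choices \<in> choice_space p K \<rightarrow>\<^sub>M run_space"
  by (rule measurable_into_run_space) (rule measurable_chain_of_choices_at)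

lemma chain_of_choices_vimage_cylinder:
  "chain_of_choices -` cylinder n qs =
     {\<omega>. \<omega> None = qs 0 \<and> (\<forall>i<n. \<omega> (Some (i, qs i)) = qs (Suc i))}"
proof (induction n)
  case 0
  then show ?case by (auto simp: cylinder_def)
next
  case (Suc n)
  have "cylinder (Suc n) qs = cylinder n qs \<inter> {r. r (Suc n) = qs (Suc n)}"
    by (auto simp: cylinder_def le_Suc_eq)
  then have "chain_of_choices -` cylinder (Suc n) qs =
      chain_of_choices -` cylinder n qs \<inter> {\<omega>. \<omega> (Some (n, chain_of_choices \<omega> n)) = qs (Suc n)}"
    by auto
  also have "\<dots> = {\<omega>. \<omega> None = qs 0 \<and> (\<forall>i<Suc n. \<omega> (Some (i, qs i)) = qs (Suc i))}"
  proof -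
    have "chain_of_choices \<omega> n = qs n" if "\<omega> \<in> chain_of_choices -` cylinder n qs" for \<omega>
      using that by (auto simp: cylinder_def)
    then show ?thesis
      unfolding Suc by (auto simp: less_Suc_eq)
  qed
  finally show ?case .
qed

lemma chain_measure_distr_choices:
  "chain_measure p K (distr (choice_space p K) run_space chain_of_choices)"
proof -
  let ?Mj = "\<lambda>j. measure_pmf (choice_pmf p K j)"
  let ?M = "distr (choice_space p K) run_space chain_of_choices"
  have "emeasure ?M (cylinder n qs) = ennreal (cylinder_prob p K n qs)" for n qs
  proof -
    define J where "J = insert None ((\<lambda>i. Some (i, qs i)) ` {..<n})"
    define X :: "(nat \<times> nat) option \<Rightarrow> nat set" where
      "X = (\<lambda>j. case j of None \<Rightarrow> {qs 0} | Some (i, q) \<Rightarrow> {qs (Suc i)})"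
    have "chain_of_choices -` cylinder n qs \<inter> space (choice_space p K) = prod_emb UNIV ?Mj J (Pi\<^sub>E J X)"
      unfolding chain_of_choices_vimage_cylinder by (auto simp: prod_emb_iff J_def X_def PiE_iff)
    then have "emeasure ?M (cylinder n qs) = emeasure (choice_space p K) (prod_emb UNIV ?Mj J (Pi\<^sub>E J X))"
      by (simp add: emeasure_distr[OF measurable_chain_of_choices])
    also have "\<dots> = (\<Prod>j\<in>J. emeasure (?Mj j) (X j))"
      unfolding choice_space_def by (rule emeasure_PiM_emb) (auto simp: J_def prob_space_measure_pmf)
    also have "\<dots> = ennreal (pmf p (qs 0)) * (\<Prod>i<n. ennreal (pmf (K i (qs i)) (qs (Suc i))))"
      unfolding J_def
      by (subst prod.insert) (auto simp: prod.reindex inj_on_def X_def choice_pmf_def emeasure_pmf_single)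
    also have "\<dots> = ennreal (cylinder_prob p K n qs)"
      by (simp add: cylinder_prob_def prod_ennreal ennreal_mult' prod_nonneg)
    finally show ?thesis .
  qed
  moreover have "prob_space ?M"
    by (rule prob_space.prob_space_distr[OF prob_space_choice_space measurable_chain_of_choices])
  ultimately show ?thesis
    by (simp add: chain_measure_def measure_def cylinder_prob_def prod_nonneg)
qed

lemma prod_emb_eq_UN_cylinder:
  assumes "J \<subseteq> {..n}"
  shows "prod_emb UNIV (\<lambda>_. count_space UNIV) J (Pi\<^sub>E J A) =
    (\<Union>qs\<in>{qs \<in> {..n} \<rightarrow>\<^sub>E UNIV. \<forall>i\<in>J. qs i \<in> A i}. cylinder n qs)"
proof (intro set_eqI iffI)
  fix r assume "r \<in> prod_emb UNIV (\<lambda>_. count_space UNIV) J (Pi\<^sub>E J A)"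
  then show "r \<in> (\<Union>qs\<in>{qs \<in> {..n} \<rightarrow>\<^sub>E UNIV. \<forall>i\<in>J. qs i \<in> A i}. cylinder n qs)"
    using assms by (intro UN_I[of "restrict r {..n}"]) (auto simp: prod_emb_iff PiE_iff cylinder_def)
next
  fix r assume "r \<in> (\<Union>qs\<in>{qs \<in> {..n} \<rightarrow>\<^sub>E UNIV. \<forall>i\<in>J. qs i \<in> A i}. cylinder n qs)"
  then show "r \<in> prod_emb UNIV (\<lambda>_. count_space UNIV) J (Pi\<^sub>E J A)"
    using assms by (auto simp: prod_emb_iff PiE_iff cylinder_def subset_eq)
qed

lemma disjoint_family_on_cylinder: "disjoint_family_on (cylinder n) ({..n} \<rightarrow>\<^sub>E (UNIV :: nat set))"
  unfolding disjoint_family_on_def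
proof (intro ballI impI)
  fix a b :: "nat \<Rightarrow> nat" assume "a \<in> {..n} \<rightarrow>\<^sub>E UNIV" "b \<in> {..n} \<rightarrow>\<^sub>E UNIV" "a \<noteq> b"
  then obtain i where "i \<le> n" "a i \<noteq> b i"
    by (metis PiE_ext atMost_iff)
  then show "cylinder n a \<inter> cylinder n b = {}"
    by (auto simp: cylinder_def)
qed

lemma chain_measure_prod_emb:
  assumes M: "chain_measure p K M" and J: "J \<subseteq> {..n}"
  shows "emeasure M (prod_emb UNIV (\<lambda>_. count_space UNIV) J (Pi\<^sub>E J A)) =
    (\<integral>\<^sup>+qs. ennreal (cylinder_prob p K n qs) \<partial>count_space {qs \<in> {..n} \<rightarrow>\<^sub>E UNIV. \<forall>i\<in>J. qs i \<in> A i})"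
proof -
  let ?Q = "{qs \<in> {..n} \<rightarrow>\<^sub>E UNIV. \<forall>i\<in>J. qs i \<in> A i}"
  interpret prob_space M
    using M by (simp add: chain_measure_def)
  have "countable ?Q"
    by (rule countable_subset[OF _ countable_PiE[of "{..n}" "\<lambda>_. UNIV::nat set"]]) auto
  moreover have "disjoint_family_on (cylinder n) ?Q"
    by (rule disjoint_family_on_mono[OF _ disjoint_family_on_cylinder]) auto
  moreover have "sets M = sets run_space"
    using M by (simp add: chain_measure_def)
  ultimately have "emeasure M (\<Union>(cylinder n ` ?Q)) = (\<integral>\<^sup>+qs. emeasure M (cylinder n qs) \<partial>count_space ?Q)"
    by (intro emeasure_UN_countable) auto
  then show ?thesis
    using M by (simp add: prod_emb_eq_UN_cylinder[OF J] chain_measure_def emeasure_eq_measure)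
qed

lemma chain_measure_unique:
  assumes M: "chain_measure p K M" and M': "chain_measure p K M'"
  shows "M = M'"
proof (rule measure_eqI_PiM_infinite[where I=UNIV and M="\<lambda>_. count_space UNIV"])
  show "sets M = sets (PiM UNIV (\<lambda>_. count_space UNIV))" "sets M' = sets (PiM UNIV (\<lambda>_. count_space UNIV))"
    using M M' by (simp_all add: chain_measure_def run_space_def)
  show "finite_measure M"
    using M by (auto simp: chain_measure_def prob_space_def)
  fix A :: "nat \<Rightarrow> nat set" and J :: "nat set" assume "finite J"
  then have J: "J \<subseteq> {..Max (insert 0 J)}" by auto
  show "emeasure M (prod_emb UNIV (\<lambda>_. count_space UNIV) J (Pi\<^sub>E J A)) =
    emeasure M' (prod_emb UNIV (\<lambda>_. count_space UNIV) J (Pi\<^sub>E J A))"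
    by (simp only: chain_measure_prod_emb[OF M J] chain_measure_prod_emb[OF M' J])
qed

lemma chain_measure_run_prob: "chain_measure (init A) (word_kernel A w) (run_prob A w)"
proof -
  have "run_prob A w = (SOME M. chain_measure (init A) (word_kernel A w) M)"
    unfolding run_prob_def chain_measure_def run_space_def cylinder_def cylinder_prob_def by simp
  then show ?thesis
    by (metis someI chain_measure_distr_choices)
qed

lemma prob_space_run_prob: "prob_space (run_prob A w)"
  and sets_run_prob [measurable_cong]: "sets (run_prob A w) = sets run_space"
  using chain_measure_run_prob by (auto simp: chain_measure_def)

lemma space_run_prob [simp]: "space (run_prob A w) = UNIV"
  using sets_eq_imp_space_eq[OF sets_run_prob] by simp

lemma AE_choice_in_support: "AE \<omega> in choice_space p K. \<omega> j \<in> set_pmf (choice_pmf p K j)"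
proof -
  let ?Mj = "\<lambda>j. measure_pmf (choice_pmf p K j)" and ?X = "UNIV - set_pmf (choice_pmf p K j)"
  have "emeasure (choice_space p K) (prod_emb UNIV ?Mj {j} (Pi\<^sub>E {j} (\<lambda>_. ?X))) = emeasure (?Mj j) ?X"
    unfolding choice_space_def by (subst emeasure_PiM_emb) (auto simp: prob_space_measure_pmf)
  also have "\<dots> = 0"
    by (simp add: measure_pmf.emeasure_eq_measure measure_pmf_zero_iff)
  finally have "prod_emb UNIV ?Mj {j} (Pi\<^sub>E {j} (\<lambda>_. ?X)) \<in> null_sets (choice_space p K)"
    unfolding choice_space_def by (auto intro!: null_setsI)
  then show ?thesis
    by (rule AE_I') (auto simp: prod_emb_iff PiE_iff)
qed

lemma chain_measure_AE_invariant:
  assumes M: "chain_measure p K M" and p: "set_pmf p \<subseteq> S"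
    and K: "\<And>i q. q \<in> S \<Longrightarrow> set_pmf (K i q) \<subseteq> S"
  shows "AE r in M. \<forall>n. r n \<in> S"
proof -
  have "AE \<omega> in choice_space p K. \<forall>j. \<omega> j \<in> set_pmf (choice_pmf p K j)"
    unfolding AE_all_countable by (intro allI AE_choice_in_support)
  then have "AE \<omega> in choice_space p K. \<forall>n. chain_of_choices \<omega> n \<in> S"
  proof (rule AE_mp, intro AE_I2 impI allI)
    fix \<omega> n assume \<omega>: "\<forall>j. \<omega> j \<in> set_pmf (choice_pmf p K j)"
    show "chain_of_choices \<omega> n \<in> S"
    proof (induction n)
      case 0
      then show ?case using \<omega>[rule_format, of None] p by (auto simp: choice_pmf_def)
    next
      case (Suc n)
      then show ?case using \<omega>[rule_format, of "Some (n, chain_of_choices \<omega> n)"] K by (auto simp: choice_pmf_def)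
    qed
  qed
  moreover have "{r \<in> space run_space. \<forall>n. r n \<in> S} \<in> sets run_space"
    unfolding run_space_def by measurable
  ultimately show ?thesis
    unfolding chain_measure_unique[OF M chain_measure_distr_choices]
    by (subst AE_distr_iff[OF measurable_chain_of_choices]) auto
qed

lemma AE_run_prob_in_states:
  "wf_pwa A \<Longrightarrow> AE r in run_prob A w. \<forall>n. r n \<in> states A"
  by (rule chain_measure_AE_invariant[OF chain_measure_run_prob]) (auto simp: wf_pwa_def)

subsection \<open>Limits of sequences with finitely many values\<close>

lemma le_limsup_finite_range_iff:
  fixes f :: "nat \<Rightarrow> ereal"
  assumes fin: "finite (range f)"
  shows "c \<le> limsup f \<longleftrightarrow> infinite {n. c \<le> f n}"
proof -
  have "c \<le> limsup f \<longleftrightarrow> (\<exists>\<^sub>F n in sequentially. c \<le> f n)"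
  proof
    assume c: "c \<le> limsup f"
    show "\<exists>\<^sub>F n in sequentially. c \<le> f n"
    proof (rule ccontr)
      let ?V = "{v \<in> range f. v < c}"
      assume "\<not> (\<exists>\<^sub>F n in sequentially. c \<le> f n)"
      then have ev: "eventually (\<lambda>n. f n < c) sequentially"
        by (simp add: not_frequently not_le)
      then have "?V \<noteq> {}"
        by (auto simp: eventually_sequentially)
      then have "Max ?V < c"
        using Max_in[of ?V] fin by auto
      moreover have "eventually (\<lambda>n. f n \<le> Max ?V) sequentially"
        using ev by eventually_elim (auto intro!: Max_ge fin)
      then have "limsup f \<le> Max ?V"
        by (rule Limsup_bounded)
      ultimately show False
        using c by simp
    qed
  next
    assume fr: "\<exists>\<^sub>F n in sequentially. c \<le> f n"
    show "c \<le> limsup f"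
    proof (rule ccontr)
      assume "\<not> c \<le> limsup f"
      then have "\<forall>\<^sub>F n in sequentially. f n < c"
        by (intro Limsup_lessD) simp
      then have "\<not> (\<exists>\<^sub>F n in sequentially. c \<le> f n)"
        by (simp add: not_frequently not_le)
      then show False
        using fr by simp
    qed
  qed
  then show ?thesis
    by (simp add: frequently_cofinite[symmetric] cofinite_eq_sequentially)
qed

lemma le_liminf_finite_range_iff:
  fixes f :: "nat \<Rightarrow> ereal"
  assumes fin: "finite (range f)"
  shows "c \<le> liminf f \<longleftrightarrow> finite {n. \<not> c \<le> f n}"
proof -
  have "c \<le> liminf f \<longleftrightarrow> (\<forall>\<^sub>F n in sequentially. c \<le> f n)"
  proof
    let ?V = "{v \<in> range f. v < c}"
    assume c: "c \<le> liminf f"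
    show "\<forall>\<^sub>F n in sequentially. c \<le> f n"
    proof (cases "?V = {}")
      case True
      then show ?thesis
        by (auto simp: not_less intro!: always_eventually)
    next
      case False
      then have "Max ?V < c"
        using Max_in[of ?V] fin by auto
      then have "\<forall>\<^sub>F n in sequentially. Max ?V < f n"
        using c le_Liminf_iff by blast
      then show ?thesis
      proof eventually_elim
        case (elim n)
        show ?case
        proof (rule ccontr)
          assume "\<not> c \<le> f n"
          then have "f n \<le> Max ?V"
            using fin by (intro Max_ge) auto
          then show False
            using elim by simp
        qed
      qed
    qed
  next
    assume "\<forall>\<^sub>F n in sequentially. c \<le> f n"
    then show "c \<le> liminf f"
      by (rule Liminf_bounded)
  qed
  then show ?thesis
    by (simp add: eventually_cofinite[symmetric] cofinite_eq_sequentially)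
qed

lemma finite_range_ereal_of_rat:
  "(\<And>n. z n \<in> W) \<Longrightarrow> finite W \<Longrightarrow> finite (range (\<lambda>n. ereal (real_of_rat (z n))))"
  by (rule finite_subset[of _ "(\<lambda>q. ereal (real_of_rat q)) ` W"]) auto

lemma le_LimSupV_iff:
  "(\<And>n. z n \<in> W) \<Longrightarrow> finite W \<Longrightarrow> ereal \<eta> \<le> LimSupV z \<longleftrightarrow> infinite {n. \<eta> \<le> real_of_rat (z n)}"
  unfolding LimSupV_def by (subst le_limsup_finite_range_iff[OF finite_range_ereal_of_rat]) auto

lemma le_LimInfV_iff:
  "(\<And>n. z n \<in> W) \<Longrightarrow> finite W \<Longrightarrow> ereal \<eta> \<le> LimInfV z \<longleftrightarrow> finite {n. \<not> \<eta> \<le> real_of_rat (z n)}"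
  unfolding LimInfV_def by (subst le_liminf_finite_range_iff[OF finite_range_ereal_of_rat]) auto

subsection \<open>Merging two sequences into one whose limsup is the minimum\<close>

text \<open>Both sequences take values in a finite set \<open>W\<close>. A threshold \<open>t \<in> W\<close> becomes pending when
  \<open>x\<close> reaches it and stops being pending when \<open>y\<close> reaches it; at that moment the merged sequence
  emits the largest such \<open>t\<close> (and \<open>Min W\<close> when there is none). So a threshold is emitted
  infinitely often iff both \<open>x\<close> and \<open>y\<close> reach it infinitely often.\<close>

definition pending_step :: "'b::linorder set \<Rightarrow> 'b set \<Rightarrow> 'b \<Rightarrow> 'b \<Rightarrow> 'b set" where
  "pending_step W F a b = {t\<in>W. (t \<notin> F \<and> t \<le> a) \<or> (t \<in> F \<and> \<not> t \<le> b)}"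

definition released :: "'b::linorder set \<Rightarrow> 'b set \<Rightarrow> 'b \<Rightarrow> 'b" where
  "released W F b = Max (insert (Min W) {t\<in>F. t \<le> b})"

primrec pending :: "'b::linorder set \<Rightarrow> (nat \<Rightarrow> 'b) \<Rightarrow> (nat \<Rightarrow> 'b) \<Rightarrow> nat \<Rightarrow> 'b set" where
  "pending W x y 0 = {}"
| "pending W x y (Suc n) = pending_step W (pending W x y n) (x n) (y n)"

definition threshold_merge :: "'b::linorder set \<Rightarrow> (nat \<Rightarrow> 'b) \<Rightarrow> (nat \<Rightarrow> 'b) \<Rightarrow> nat \<Rightarrow> 'b" where
  "threshold_merge W x y n = released W (pending W x y n) (y n)"

lemma pending_step_subset: "pending_step W F a b \<subseteq> W"
  by (auto simp: pending_step_def)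

lemma pending_subset: "pending W x y n \<subseteq> W"
  by (cases n) (auto simp: pending_step_def)

lemma le_released_iff:
  assumes "finite W" "F \<subseteq> W"
  shows "\<theta> \<le> released W F b \<longleftrightarrow> \<theta> \<le> Min W \<or> (\<exists>t\<in>F. t \<le> b \<and> \<theta> \<le> t)"
  unfolding released_def using assms by (subst Max_ge_iff) (auto dest: finite_subset)

lemma released_in:
  assumes "finite W" "W \<noteq> {}" "F \<subseteq> W"
  shows "released W F b \<in> W"
proof -
  have "released W F b \<in> insert (Min W) {t\<in>F. t \<le> b}"
    unfolding released_def using assms by (intro Max_in) (auto dest: finite_subset)
  moreover have "Min W \<in> W"
    using assms by simp
  ultimately show ?thesis
    using assms(3) by auto
qed

lemma threshold_merge_in: "finite W \<Longrightarrow> W \<noteq> {} \<Longrightarrow> threshold_merge W x y n \<in> W"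
  unfolding threshold_merge_def by (rule released_in) (auto simp: pending_subset)

lemma le_threshold_merge_iff:
  "finite W \<Longrightarrow> \<theta> \<le> threshold_merge W x y n \<longleftrightarrow> \<theta> \<le> Min W \<or> (\<exists>t\<in>pending W x y n. t \<le> y n \<and> \<theta> \<le> t)"
  unfolding threshold_merge_def by (rule le_released_iff[OF _ pending_subset])

lemma released_le: "finite W \<Longrightarrow> F \<subseteq> W \<Longrightarrow> Min W \<le> b \<Longrightarrow> released W F b \<le> b"
  unfolding released_def by (subst Max_le_iff) (auto dest: finite_subset)

lemma threshold_merge_le: "finite W \<Longrightarrow> y n \<in> W \<Longrightarrow> threshold_merge W x y n \<le> y n"
  unfolding threshold_merge_def by (intro released_le pending_subset) auto

lemma not_pending_if_x_below:
  assumes "t \<notin> pending W x y n" and "\<And>m. n \<le> m \<Longrightarrow> \<not> t \<le> x m"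
  shows "t \<notin> pending W x y (n + k)"
  using assms by (induction k) (auto simp: pending_step_def)

lemma finite_released_if_x_below:
  assumes "\<And>m. N \<le> m \<Longrightarrow> \<not> t \<le> x m"
  shows "finite {n. N \<le> n \<and> t \<in> pending W x y n \<and> t \<le> y n}" (is "finite ?R")
proof (cases "?R = {}")
  case False
  then obtain n0 where n0: "n0 \<in> ?R" by blast
  then have out: "t \<notin> pending W x y (Suc n0 + k)" for k
    using assms by (intro not_pending_if_x_below) (auto simp: pending_step_def)
  have "m \<le> n0" if "m \<in> ?R" for m
  proof (rule ccontr)
    assume "\<not> m \<le> n0"
    then obtain k where "m = Suc n0 + k"
      by (metis add_Suc less_imp_Suc_add not_le)
    then show False
      using out[of k] that by simp
  qed
  then show ?thesis
    by (meson finite_atMost finite_subset atMost_iff subsetI)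
qed (metis finite.emptyI)

lemma infinite_x_if_infinite_threshold_merge:
  assumes W: "finite W" and \<theta>: "\<not> \<theta> \<le> Min W" and inf: "infinite {n. \<theta> \<le> threshold_merge W x y n}"
  shows "infinite {n. \<theta> \<le> x n}"
proof
  assume "finite {n. \<theta> \<le> x n}"
  then obtain N where "{n. \<theta> \<le> x n} \<subseteq> {..<N}"
    using finite_nat_bounded by blast
  then have N: "\<And>m. N \<le> m \<Longrightarrow> \<not> \<theta> \<le> x m"
    by auto
  let ?R = "\<lambda>t. {n. N \<le> n \<and> t \<in> pending W x y n \<and> t \<le> y n}"
  have "n \<in> {..<N} \<union> (\<Union>t\<in>{t\<in>W. \<theta> \<le> t}. ?R t)" if n: "\<theta> \<le> threshold_merge W x y n" for n
  proof -
    obtain t where "t \<in> pending W x y n" "t \<le> y n" "\<theta> \<le> t"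
      using n \<theta> by (auto simp: le_threshold_merge_iff[OF W])
    then show ?thesis
      using pending_subset[of W x y n] by (cases "n < N") auto
  qed
  then have "{n. \<theta> \<le> threshold_merge W x y n} \<subseteq> {..<N} \<union> (\<Union>t\<in>{t\<in>W. \<theta> \<le> t}. ?R t)"
    by blast
  moreover have "finite (?R t)" if "\<theta> \<le> t" for t
  proof (rule finite_released_if_x_below)
    show "\<not> t \<le> x m" if "N \<le> m" for m
      using N[OF that] \<open>\<theta> \<le> t\<close> order.trans by blast
  qed
  then have "finite ({..<N} \<union> (\<Union>t\<in>{t\<in>W. \<theta> \<le> t}. ?R t))"
    using W by simp
  ultimately have "finite {n. \<theta> \<le> threshold_merge W x y n}"
    by (rule finite_subset)
  then show False
    using inf by simp
qed

lemma infinite_threshold_merge_if_infinite_x_y: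
  assumes W: "finite W" "\<theta> \<in> W"
    and infx: "infinite {n. \<theta> \<le> x n}" and infy: "infinite {n. \<theta> \<le> y n}"
  shows "infinite {n. \<theta> \<le> threshold_merge W x y n}"
proof -
  have "infinite {n. \<theta> \<in> pending W x y n \<and> \<theta> \<le> y n}"
  proof
    assume "finite {n. \<theta> \<in> pending W x y n \<and> \<theta> \<le> y n}"
    then obtain N where "{n. \<theta> \<in> pending W x y n \<and> \<theta> \<le> y n} \<subseteq> {..<N}"
      using finite_nat_bounded by blast
    then have N: "\<And>n. N \<le> n \<Longrightarrow> \<theta> \<in> pending W x y n \<Longrightarrow> \<not> \<theta> \<le> y n"
      by auto
    obtain n1 where n1: "N \<le> n1" "\<theta> \<le> x n1"
      using infx by (auto simp: infinite_nat_iff_unbounded_le)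
    have pending: "\<theta> \<in> pending W x y m" if "Suc n1 \<le> m" for m
      using that
    proof (induction m rule: dec_induct)
      case base
      show ?case
        using n1 N[of n1] W(2) by (auto simp: pending_step_def)
    next
      case (step k)
      then show ?case
        using n1 N[of k] W(2) by (auto simp: pending_step_def)
    qed
    obtain m where "Suc n1 \<le> m" "\<theta> \<le> y m"
      using infy by (auto simp: infinite_nat_iff_unbounded_le)
    then show False
      using N[of m] pending[of m] n1 by auto
  qed
  moreover have "{n. \<theta> \<in> pending W x y n \<and> \<theta> \<le> y n} \<subseteq> {n. \<theta> \<le> threshold_merge W x y n}"
    by (auto simp: le_threshold_merge_iff[OF W(1)])
  ultimately show ?thesis
    using finite_subset by blast
qed

lemma infinite_le_threshold_merge_iff:
  assumes W: "finite W" "\<theta> \<in> W" and x: "\<And>n. x n \<in> W" and y: "\<And>n. y n \<in> W"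
  shows "infinite {n. \<theta> \<le> threshold_merge W x y n} \<longleftrightarrow> infinite {n. \<theta> \<le> x n} \<and> infinite {n. \<theta> \<le> y n}"
proof (cases "\<theta> \<le> Min W")
  case True
  have below: "\<theta> \<le> z" if "z \<in> W" for z
    using True Min_le[OF W(1) that] by (rule order.trans)
  have "W \<noteq> {}"
    using W(2) by auto
  then have "\<theta> \<le> threshold_merge W x y n" "\<theta> \<le> x n" "\<theta> \<le> y n" for n
    by (simp_all add: below x y threshold_merge_in W(1))
  then show ?thesis
    by simp
next
  case False
  have sub: "{n. \<theta> \<le> threshold_merge W x y n} \<subseteq> {n. \<theta> \<le> y n}"
    by (auto intro: order.trans[OF _ threshold_merge_le[OF W(1) y]])
  show ?thesis
  proof
    assume inf: "infinite {n. \<theta> \<le> threshold_merge W x y n}"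
    show "infinite {n. \<theta> \<le> x n} \<and> infinite {n. \<theta> \<le> y n}"
      using infinite_x_if_infinite_threshold_merge[OF W(1) False inf] infinite_super[OF sub inf] by blast
  next
    assume "infinite {n. \<theta> \<le> x n} \<and> infinite {n. \<theta> \<le> y n}"
    then show "infinite {n. \<theta> \<le> threshold_merge W x y n}"
      using infinite_threshold_merge_if_infinite_x_y[OF W] by blast
  qed
qed

text \<open>On the finite set \<open>W\<close> an upward closed property is of the form \<open>\<theta> \<le> _\<close>.\<close>

lemma infinite_threshold_merge_upclosed_iff:
  assumes W: "finite W" "W \<noteq> {}" and x: "\<And>n. x n \<in> W" and y: "\<And>n. y n \<in> W"
    and P: "\<And>a b. P a \<Longrightarrow> a \<le> b \<Longrightarrow> P b"
  shows "infinite {n. P (threshold_merge W x y n)} \<longleftrightarrow> infinite {n. P (x n)} \<and> infinite {n. P (y n)}"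
proof (cases "\<exists>t\<in>W. P t")
  case True
  define \<theta> where "\<theta> = Min {t\<in>W. P t}"
  have "\<theta> \<in> {t\<in>W. P t}"
    unfolding \<theta>_def using W True by (intro Min_in) auto
  then have \<theta>: "\<theta> \<in> W" "P \<theta>"
    by simp_all
  have eq: "P z \<longleftrightarrow> \<theta> \<le> z" if "z \<in> W" for z
  proof
    assume "P z"
    then show "\<theta> \<le> z"
      unfolding \<theta>_def using W(1) that by (intro Min_le) auto
  qed (rule P[OF \<theta>(2)])
  have "{n. P (threshold_merge W x y n)} = {n. \<theta> \<le> threshold_merge W x y n}"
    using eq threshold_merge_in[OF W] by blast
  moreover have "{n. P (x n)} = {n. \<theta> \<le> x n}" "{n. P (y n)} = {n. \<theta> \<le> y n}"
    using eq x y by blast+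
  ultimately show ?thesis
    using infinite_le_threshold_merge_iff[OF W(1) \<theta>(1) x y] by simp
next
  case False
  then show ?thesis
    using threshold_merge_in[OF W] x by auto
qed

subsection \<open>The product automaton\<close>

text \<open>A state of the product is a triple of two component states and a set of pending
  thresholds, encoded as a natural number.\<close>

definition encode_state :: "nat \<Rightarrow> nat \<Rightarrow> rat set \<Rightarrow> nat" where
  "encode_state q1 q2 F = to_nat (q1, q2, sorted_list_of_set F)"

definition decode_state :: "nat \<Rightarrow> nat \<times> nat \<times> rat set" where
  "decode_state z = (case from_nat z :: nat \<times> nat \<times> rat list of (q1, q2, l) \<Rightarrow> (q1, q2, set l))"

lemma decode_encode_state [simp]: "finite F \<Longrightarrow> decode_state (encode_state q1 q2 F) = (q1, q2, F)"
  by (simp add: decode_state_def encode_state_def)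

lemma encode_state_eqD: "encode_state q1 q2 F = encode_state q1' q2' F' \<Longrightarrow> q1 = q1' \<and> q2 = q2'"
  by (simp add: encode_state_def)

definition weight_values :: "rat \<Rightarrow> 'a pwa \<Rightarrow> 'a pwa \<Rightarrow> rat set" where
  "weight_values s A1 A2 = insert 0
     ((\<lambda>(q, a, q'). s * wt A1 q a q') ` (states A1 \<times> UNIV \<times> states A1) \<union>
      (\<lambda>(q, a, q'). s * wt A2 q a q') ` (states A2 \<times> UNIV \<times> states A2))"

lemma finite_weight_values:
  "wf_pwa A1 \<Longrightarrow> wf_pwa A2 \<Longrightarrow> finite (weight_values s A1 A2 :: rat set)"
  for A1 A2 :: "'a::finite pwa"
  unfolding weight_values_def wf_pwa_def by auto

lemma weight_values_not_empty: "weight_values s A1 A2 \<noteq> {}"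
  by (simp add: weight_values_def)

lemma weight_in_weight_values:
  "q \<in> states A1 \<Longrightarrow> q' \<in> states A1 \<Longrightarrow> s * wt A1 q a q' \<in> weight_values s A1 A2"
  "q \<in> states A2 \<Longrightarrow> q' \<in> states A2 \<Longrightarrow> s * wt A2 q a q' \<in> weight_values s A1 A2"
  unfolding weight_values_def by (force intro!: image_eqI[where x="(q, a, q')"])+

lemma scaled_wseq_in_weight_values:
  "\<forall>n. r n \<in> states A1 \<Longrightarrow> s * wseq A1 w r n \<in> weight_values s A1 A2"
  "\<forall>n. r n \<in> states A2 \<Longrightarrow> s * wseq A2 w r n \<in> weight_values s A1 A2"
  by (simp_all add: wseq_def weight_in_weight_values)

definition product_step :: "rat \<Rightarrow> 'a pwa \<Rightarrow> 'a pwa \<Rightarrow> 'a \<Rightarrow> nat \<Rightarrow> nat \<times> nat \<Rightarrow> nat" where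
  "product_step s A1 A2 a z = (\<lambda>(q1', q2'). case decode_state z of (q1, q2, F) \<Rightarrow>
     encode_state q1' q2' (pending_step (weight_values s A1 A2) F (s * wt A1 q1 a q1') (s * wt A2 q2 a q2')))"

text \<open>Along a pair of runs, the product feeds the scaled weights of both automata into
  \<open>threshold_merge\<close>. For \<open>s = 1\<close> this computes the minimum of the limsups; for \<open>s = -1\<close> all
  weights are negated, which turns it into the maximum of the liminfs.\<close>

definition product_pwa :: "rat \<Rightarrow> 'a pwa \<Rightarrow> 'a pwa \<Rightarrow> 'a pwa" where
  "product_pwa s A1 A2 =
     \<lparr> states = (\<lambda>(q1, q2, F). encode_state q1 q2 F) ` (states A1 \<times> states A2 \<times> Pow (weight_values s A1 A2)),
       init = map_pmf (\<lambda>(q1, q2). encode_state q1 q2 {}) (pair_pmf (init A1) (init A2)),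
       trans = (\<lambda>z a. case decode_state z of (q1, q2, _) \<Rightarrow>
          map_pmf (product_step s A1 A2 a z) (pair_pmf (trans A1 q1 a) (trans A2 q2 a))),
       wt = (\<lambda>z a z'. case decode_state z of (_, q2, F) \<Rightarrow> case decode_state z' of (_, q2', _) \<Rightarrow>
          s * released (weight_values s A1 A2) F (s * wt A2 q2 a q2')) \<rparr>"

lemma encode_state_in_states_product_pwa:
  "q1 \<in> states A1 \<Longrightarrow> q2 \<in> states A2 \<Longrightarrow> F \<subseteq> weight_values s A1 A2 \<Longrightarrow>
    encode_state q1 q2 F \<in> states (product_pwa s A1 A2)"
  by (force simp: product_pwa_def)

lemma wf_product_pwa:
  fixes A1 A2 :: "'a::finite pwa"
  assumes wf: "wf_pwa A1" "wf_pwa A2"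
  shows "wf_pwa (product_pwa s A1 A2)"
proof -
  let ?W = "weight_values s A1 A2"
  have "set_pmf (init (product_pwa s A1 A2)) \<subseteq> states (product_pwa s A1 A2)"
  proof
    fix z assume "z \<in> set_pmf (init (product_pwa s A1 A2))"
    then obtain q1 q2 where "q1 \<in> set_pmf (init A1)" "q2 \<in> set_pmf (init A2)" "z = encode_state q1 q2 {}"
      by (auto simp: product_pwa_def)
    then show "z \<in> states (product_pwa s A1 A2)"
      using wf by (auto simp: wf_pwa_def intro!: encode_state_in_states_product_pwa)
  qed
  moreover have "set_pmf (trans (product_pwa s A1 A2) z a) \<subseteq> states (product_pwa s A1 A2)"
    if "z \<in> states (product_pwa s A1 A2)" for z a
  proof
    obtain q1 q2 F where q: "q1 \<in> states A1" "q2 \<in> states A2" "F \<subseteq> ?W" "z = encode_state q1 q2 F"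
      using \<open>z \<in> _\<close> by (auto simp: product_pwa_def)
    then have "finite F"
      using finite_weight_values[OF wf] finite_subset by blast
    fix z' assume "z' \<in> set_pmf (trans (product_pwa s A1 A2) z a)"
    then obtain q1' q2' where q': "q1' \<in> set_pmf (trans A1 q1 a)" "q2' \<in> set_pmf (trans A2 q2 a)"
      and z': "z' = product_step s A1 A2 a z (q1', q2')"
      using q \<open>finite F\<close> by (auto simp: product_pwa_def)
    have "q1' \<in> states A1" "q2' \<in> states A2"
      using wf q q' unfolding wf_pwa_def by blast+
    then show "z' \<in> states (product_pwa s A1 A2)"
      unfolding z' using q \<open>finite F\<close>
      by (simp add: product_step_def encode_state_in_states_product_pwa pending_step_subset)
  qed
  moreover have "finite (states (product_pwa s A1 A2))"
    using wf finite_weight_values[OF wf] by (simp add: wf_pwa_def product_pwa_def)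
  ultimately show ?thesis
    by (simp add: wf_pwa_def)
qed

primrec product_run :: "rat \<Rightarrow> 'a pwa \<Rightarrow> 'a pwa \<Rightarrow> (nat \<Rightarrow> 'a) \<Rightarrow> (nat \<Rightarrow> nat) \<Rightarrow> (nat \<Rightarrow> nat) \<Rightarrow> nat \<Rightarrow> nat" where
  "product_run s A1 A2 w r1 r2 0 = encode_state (r1 0) (r2 0) {}"
| "product_run s A1 A2 w r1 r2 (Suc n) =
     product_step s A1 A2 (w n) (product_run s A1 A2 w r1 r2 n) (r1 (Suc n), r2 (Suc n))"

abbreviation scaled_weights :: "rat \<Rightarrow> 'a pwa \<Rightarrow> (nat \<Rightarrow> 'a) \<Rightarrow> (nat \<Rightarrow> nat) \<Rightarrow> nat \<Rightarrow> rat" where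
  "scaled_weights s A w r \<equiv> \<lambda>n. s * wseq A w r n"

lemma product_run_eq_encode_state: "\<exists>F. product_run s A1 A2 w r1 r2 n = encode_state (r1 n) (r2 n) F"
  by (cases n; simp add: product_step_def prod.case_eq_if; blast)

lemma decode_product_run:
  fixes A1 A2 :: "'a::finite pwa"
  assumes wf: "wf_pwa A1" "wf_pwa A2"
  shows "decode_state (product_run s A1 A2 w r1 r2 n) =
    (r1 n, r2 n, pending (weight_values s A1 A2) (scaled_weights s A1 w r1) (scaled_weights s A2 w r2) n)"
proof (induction n)
  case 0
  then show ?case by simp
next
  case (Suc n)
  let ?P = "pending (weight_values s A1 A2) (scaled_weights s A1 w r1) (scaled_weights s A2 w r2)"
  have "product_run s A1 A2 w r1 r2 (Suc n) = encode_state (r1 (Suc n)) (r2 (Suc n)) (?P (Suc n))"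
    using Suc.IH by (simp add: product_step_def wseq_def)
  moreover have "finite (?P (Suc n))"
    by (rule finite_subset[OF pending_subset finite_weight_values[OF wf]])
  ultimately show ?case
    by simp
qed

lemma wseq_product_run:
  fixes A1 A2 :: "'a::finite pwa"
  assumes "wf_pwa A1" "wf_pwa A2"
  shows "wseq (product_pwa s A1 A2) w (product_run s A1 A2 w r1 r2) =
    (\<lambda>n. s * threshold_merge (weight_values s A1 A2) (scaled_weights s A1 w r1) (scaled_weights s A2 w r2) n)"
  by (rule ext)
    (simp add: wseq_def product_pwa_def decode_product_run[OF assms] threshold_merge_def del: product_run.simps)

lemma product_run_cong:
  assumes "\<And>i. i \<le> n \<Longrightarrow> r1 i = r1' i \<and> r2 i = r2' i"
  shows "product_run s A1 A2 w r1 r2 n = product_run s A1 A2 w r1' r2' n"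
  using assms
proof (induction n)
  case (Suc n)
  then have "product_run s A1 A2 w r1 r2 n = product_run s A1 A2 w r1' r2' n"
    by simp
  then show ?case
    using Suc.prems[of "Suc n"] by simp
qed simp

lemma product_run_eqD:
  assumes "product_run s A1 A2 w r1 r2 i = product_run s A1 A2 w r1' r2' i"
  shows "r1 i = r1' i \<and> r2 i = r2' i"
proof -
  obtain F F' where "product_run s A1 A2 w r1 r2 i = encode_state (r1 i) (r2 i) F"
    "product_run s A1 A2 w r1' r2' i = encode_state (r1' i) (r2' i) F'"
    using product_run_eq_encode_state by metis
  then show ?thesis
    using assms encode_state_eqD by metis
qed

lemma product_run_in_cylinder_iff:
  "product_run s A1 A2 w r1 r2 \<in> cylinder n (product_run s A1 A2 w r1' r2') \<longleftrightarrow>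
    r1 \<in> cylinder n r1' \<and> r2 \<in> cylinder n r2'"
proof
  assume "product_run s A1 A2 w r1 r2 \<in> cylinder n (product_run s A1 A2 w r1' r2')"
  then show "r1 \<in> cylinder n r1' \<and> r2 \<in> cylinder n r2'"
    by (auto simp: cylinder_def dest: product_run_eqD)
next
  assume "r1 \<in> cylinder n r1' \<and> r2 \<in> cylinder n r2'"
  then show "product_run s A1 A2 w r1 r2 \<in> cylinder n (product_run s A1 A2 w r1' r2')"
    unfolding cylinder_def by (auto intro: product_run_cong)
qed

lemma inj_product_step: "inj (product_step s A1 A2 a z)"
  unfolding inj_on_def product_step_def by (auto simp: prod.case_eq_if dest: encode_state_eqD)

lemma trans_product_run:
  fixes A1 A2 :: "'a::finite pwa"
  assumes "wf_pwa A1" "wf_pwa A2"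
  shows "trans (product_pwa s A1 A2) (product_run s A1 A2 w r1 r2 n) a =
    map_pmf (product_step s A1 A2 a (product_run s A1 A2 w r1 r2 n)) (pair_pmf (trans A1 (r1 n) a) (trans A2 (r2 n) a))"
  by (simp add: product_pwa_def decode_product_run[OF assms])

lemma cylinder_prob_product_run:
  fixes A1 A2 :: "'a::finite pwa"
  assumes wf: "wf_pwa A1" "wf_pwa A2"
  shows "cylinder_prob (init (product_pwa s A1 A2)) (word_kernel (product_pwa s A1 A2) w) n (product_run s A1 A2 w r1 r2) =
     cylinder_prob (init A1) (word_kernel A1 w) n r1 * cylinder_prob (init A2) (word_kernel A2 w) n r2"
proof (induction n)
  case 0
  let ?f = "\<lambda>(q1, q2). encode_state q1 q2 {}"
  have "inj ?f"
    by (auto simp: inj_on_def dest: encode_state_eqD)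
  then have "pmf (map_pmf ?f (pair_pmf (init A1) (init A2))) (?f (r1 0, r2 0)) =
      pmf (init A1) (r1 0) * pmf (init A2) (r2 0)"
    by (simp only: pmf_map_inj' pmf_pair)
  then show ?case
    by (simp add: cylinder_prob_def product_pwa_def)
next
  case (Suc n)
  have "pmf (trans (product_pwa s A1 A2) (product_run s A1 A2 w r1 r2 n) (w n)) (product_run s A1 A2 w r1 r2 (Suc n)) =
      pmf (trans A1 (r1 n) (w n)) (r1 (Suc n)) * pmf (trans A2 (r2 n) (w n)) (r2 (Suc n))"
    by (simp only: product_run.simps trans_product_run[OF wf] pmf_map_inj'[OF inj_product_step] pmf_pair)
  then show ?case
    using Suc.IH by (simp add: cylinder_prob_Suc)
qed

lemma product_run_prefix_if_cylinder_prob_nonzero: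
  fixes A1 A2 :: "'a::finite pwa"
  assumes wf: "wf_pwa A1" "wf_pwa A2"
  shows "cylinder_prob (init (product_pwa s A1 A2)) (word_kernel (product_pwa s A1 A2) w) n qs \<noteq> 0 \<Longrightarrow>
    \<exists>r1 r2. \<forall>i\<le>n. qs i = product_run s A1 A2 w r1 r2 i"
proof (induction n)
  case 0
  then have "qs 0 \<in> set_pmf (init (product_pwa s A1 A2))"
    by (simp add: cylinder_prob_def set_pmf_eq)
  then obtain q1 q2 where "qs 0 = encode_state q1 q2 {}"
    by (auto simp: product_pwa_def)
  then have "\<forall>i\<le>0. qs i = product_run s A1 A2 w (\<lambda>_. q1) (\<lambda>_. q2) i"
    by simp
  then show ?case by blast
next
  case (Suc n)
  then obtain r1 r2 where r: "\<forall>i\<le>n. qs i = product_run s A1 A2 w r1 r2 i"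
    by (auto simp: cylinder_prob_Suc)
  have "pmf (trans (product_pwa s A1 A2) (qs n) (w n)) (qs (Suc n)) \<noteq> 0"
    using Suc.prems by (simp add: cylinder_prob_Suc)
  then have "qs (Suc n) \<in> set_pmf (trans (product_pwa s A1 A2) (product_run s A1 A2 w r1 r2 n) (w n))"
    using r by (simp add: set_pmf_eq)
  then obtain q1 q2 where q: "qs (Suc n) = product_step s A1 A2 (w n) (product_run s A1 A2 w r1 r2 n) (q1, q2)"
    by (auto simp: trans_product_run[OF wf])
  let ?r1 = "r1(Suc n := q1)" and ?r2 = "r2(Suc n := q2)"
  have "product_run s A1 A2 w ?r1 ?r2 i = product_run s A1 A2 w r1 r2 i" if "i \<le> n" for i
    using that by (intro product_run_cong) auto
  then have "\<forall>i\<le>Suc n. qs i = product_run s A1 A2 w ?r1 ?r2 i"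
    using r q by (auto simp: le_Suc_eq)
  then show ?case by blast
qed

lemma measurable_Pair_count_space:
  fixes f :: "'m \<Rightarrow> 'b::countable" and g :: "'m \<Rightarrow> 'c::countable"
  assumes "f \<in> M \<rightarrow>\<^sub>M count_space UNIV" and "g \<in> M \<rightarrow>\<^sub>M count_space UNIV"
  shows "(\<lambda>x. (f x, g x)) \<in> M \<rightarrow>\<^sub>M count_space UNIV"
  using measurable_Pair[OF assms] by (simp add: pair_measure_countable)

lemma measurable_product_run:
  "(\<lambda>p. product_run s A1 A2 w (fst p) (snd p)) \<in> run_space \<Otimes>\<^sub>M run_space \<rightarrow>\<^sub>M run_space"
proof (rule measurable_into_run_space)
  have fst: "(\<lambda>p. fst p i) \<in> run_space \<Otimes>\<^sub>M run_space \<rightarrow>\<^sub>M count_space UNIV"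
    and snd: "(\<lambda>p. snd p i) \<in> run_space \<Otimes>\<^sub>M run_space \<rightarrow>\<^sub>M count_space UNIV" for i
    by (auto intro: measurable_compose[OF _ measurable_run_coordinate])
  fix n
  show "(\<lambda>p. product_run s A1 A2 w (fst p) (snd p) n) \<in> run_space \<Otimes>\<^sub>M run_space \<rightarrow>\<^sub>M count_space UNIV"
  proof (induction n)
    case 0
    have "(\<lambda>p. (\<lambda>(q1, q2). encode_state q1 q2 {}) (fst p 0, snd p 0))
        \<in> run_space \<Otimes>\<^sub>M run_space \<rightarrow>\<^sub>M count_space UNIV"
      by (rule measurable_compose[OF measurable_Pair_count_space[OF fst snd] measurable_count_space])
    then show ?case
      by simp
  next
    case (Suc n)
    have "(\<lambda>p. (\<lambda>(z, q). product_step s A1 A2 (w n) z q)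
          (product_run s A1 A2 w (fst p) (snd p) n, fst p (Suc n), snd p (Suc n)))
        \<in> run_space \<Otimes>\<^sub>M run_space \<rightarrow>\<^sub>M count_space UNIV"
      by (rule measurable_compose[OF measurable_Pair_count_space[OF Suc measurable_Pair_count_space[OF fst snd]]
            measurable_count_space])
    then show ?case
      by simp
  qed
qed

lemma sets_pair_run_prob: "sets (run_prob A1 w \<Otimes>\<^sub>M run_prob A2 w) = sets (run_space \<Otimes>\<^sub>M run_space)"
  by (intro sets_pair_measure_cong sets_run_prob)

lemma space_pair_run_prob [simp]: "space (run_prob A1 w \<Otimes>\<^sub>M run_prob A2 w) = UNIV"
  by (simp add: space_pair_measure)

lemma measure_pair_run_prob_Times:
  assumes "E1 \<in> sets run_space" "E2 \<in> sets run_space"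
  shows "measure (run_prob A1 w \<Otimes>\<^sub>M run_prob A2 w) (E1 \<times> E2) = measure (run_prob A1 w) E1 * measure (run_prob A2 w) E2"
proof -
  interpret M2: prob_space "run_prob A2 w"
    by (rule prob_space_run_prob)
  show ?thesis
    using assms by (simp add: measure_def M2.emeasure_pair_measure_Times enn2real_mult)
qed

lemma measurable_product_run_pair_run_prob:
  "(\<lambda>p. product_run s A1 A2 w' (fst p) (snd p)) \<in> run_prob A1 w \<Otimes>\<^sub>M run_prob A2 w \<rightarrow>\<^sub>M run_space"
  using measurable_product_run by (simp add: measurable_cong_sets[OF sets_pair_run_prob refl])

lemma measure_vimage_product_run_cylinder:
  fixes A1 A2 :: "'a::finite pwa"
  assumes wf: "wf_pwa A1" "wf_pwa A2"
  shows "measure (run_prob A1 w \<Otimes>\<^sub>M run_prob A2 w) ((\<lambda>p. product_run s A1 A2 w (fst p) (snd p)) -` cylinder n qs) =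
    cylinder_prob (init (product_pwa s A1 A2)) (word_kernel (product_pwa s A1 A2) w) n qs"
proof (cases "\<exists>r1 r2. \<forall>i\<le>n. qs i = product_run s A1 A2 w r1 r2 i")
  case True
  then obtain r1 r2 where r: "\<forall>i\<le>n. qs i = product_run s A1 A2 w r1 r2 i"
    by blast
  then have "cylinder n qs = cylinder n (product_run s A1 A2 w r1 r2)"
    by (auto simp: cylinder_def)
  then have "(\<lambda>p. product_run s A1 A2 w (fst p) (snd p)) -` cylinder n qs = cylinder n r1 \<times> cylinder n r2"
    by (auto simp: product_run_in_cylinder_iff)
  then have "measure (run_prob A1 w \<Otimes>\<^sub>M run_prob A2 w) ((\<lambda>p. product_run s A1 A2 w (fst p) (snd p)) -` cylinder n qs) =
      measure (run_prob A1 w) (cylinder n r1) * measure (run_prob A2 w) (cylinder n r2)"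
    by (simp add: measure_pair_run_prob_Times)
  also have "\<dots> = cylinder_prob (init (product_pwa s A1 A2)) (word_kernel (product_pwa s A1 A2) w) n (product_run s A1 A2 w r1 r2)"
    using chain_measure_run_prob[of A1 w] chain_measure_run_prob[of A2 w]
    by (simp add: chain_measure_def cylinder_prob_product_run[OF wf])
  also have "\<dots> = cylinder_prob (init (product_pwa s A1 A2)) (word_kernel (product_pwa s A1 A2) w) n qs"
    using r by (intro cylinder_prob_cong) simp
  finally show ?thesis .
next
  case False
  then have "(\<lambda>p. product_run s A1 A2 w (fst p) (snd p)) -` cylinder n qs = {}"
    by (auto simp: cylinder_def) metis
  moreover have "cylinder_prob (init (product_pwa s A1 A2)) (word_kernel (product_pwa s A1 A2) w) n qs = 0"
    using product_run_prefix_if_cylinder_prob_nonzero[OF wf] False by blast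
  ultimately show ?thesis
    by simp
qed

lemma chain_measure_distr_product_run:
  fixes A1 A2 :: "'a::finite pwa"
  assumes "wf_pwa A1" "wf_pwa A2"
  shows "chain_measure (init (product_pwa s A1 A2)) (word_kernel (product_pwa s A1 A2) w)
    (distr (run_prob A1 w \<Otimes>\<^sub>M run_prob A2 w) run_space (\<lambda>p. product_run s A1 A2 w (fst p) (snd p)))"
proof -
  have "prob_space (run_prob A1 w \<Otimes>\<^sub>M run_prob A2 w)"
    by (intro prob_space_pair prob_space_run_prob)
  then show ?thesis
    by (simp add: chain_measure_def measure_distr[OF measurable_product_run_pair_run_prob]
        measure_vimage_product_run_cylinder[OF assms] prob_space.prob_space_distr measurable_product_run_pair_run_prob)
qed

lemma run_prob_product_pwa:
  fixes A1 A2 :: "'a::finite pwa"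
  assumes "wf_pwa A1" "wf_pwa A2"
  shows "run_prob (product_pwa s A1 A2) w =
    distr (run_prob A1 w \<Otimes>\<^sub>M run_prob A2 w) run_space (\<lambda>p. product_run s A1 A2 w (fst p) (snd p))"
  by (rule chain_measure_unique[OF chain_measure_run_prob chain_measure_distr_product_run[OF assms]])

lemma measure_run_prob_product_pwa:
  fixes A1 A2 :: "'a::finite pwa"
  assumes wf: "wf_pwa A1" "wf_pwa A2"
    and E: "E \<in> sets run_space" and E12: "E12 \<in> sets (run_space \<Otimes>\<^sub>M run_space)"
    and iff: "\<And>r1 r2. \<forall>n. r1 n \<in> states A1 \<Longrightarrow> \<forall>n. r2 n \<in> states A2 \<Longrightarrow>
               product_run s A1 A2 w r1 r2 \<in> E \<longleftrightarrow> (r1, r2) \<in> E12"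
  shows "measure (run_prob (product_pwa s A1 A2) w) E = measure (run_prob A1 w \<Otimes>\<^sub>M run_prob A2 w) E12"
proof -
  let ?N = "run_prob A1 w \<Otimes>\<^sub>M run_prob A2 w"
  let ?\<Phi> = "\<lambda>p. product_run s A1 A2 w (fst p) (snd p)"
  interpret pair_prob_space "run_prob A1 w" "run_prob A2 w"
    by (simp add: pair_prob_space_def pair_sigma_finite_def prob_space_run_prob prob_space_imp_sigma_finite)
  note meas = measurable_product_run_pair_run_prob[of s A1 A2 w w]
  have "{p \<in> space (run_space \<Otimes>\<^sub>M run_space). (\<forall>n. fst p n \<in> states A1) \<and> (\<forall>n. snd p n \<in> states A2)}
      \<in> sets (run_space \<Otimes>\<^sub>M run_space)"
    unfolding run_space_def by measurable
  then have "{p \<in> space ?N. (\<forall>n. fst p n \<in> states A1) \<and> (\<forall>n. snd p n \<in> states A2)} \<in> sets ?N"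
    by (simp add: sets_pair_run_prob space_pair_measure)
  then have "AE p in ?N. (\<forall>n. fst p n \<in> states A1) \<and> (\<forall>n. snd p n \<in> states A2)"
    using AE_run_prob_in_states[OF wf(1)] AE_run_prob_in_states[OF wf(2)]
    by (intro AE_pair_measure) (auto elim: AE_mp)
  then have "AE p in ?N. p \<in> ?\<Phi> -` E \<inter> space ?N \<longleftrightarrow> p \<in> E12"
    by eventually_elim (use iff in auto)
  then have "measure ?N (?\<Phi> -` E \<inter> space ?N) = measure ?N E12"
    using measurable_sets[OF meas E] E12 by (intro measure_eq_AE) (auto simp: sets_pair_run_prob)
  then show ?thesis
    by (simp add: run_prob_product_pwa[OF wf] measure_distr[OF meas E])
qed

definition threshold_prob :: "((nat \<Rightarrow> rat) \<Rightarrow> ereal) \<Rightarrow> 'a pwa \<Rightarrow> (nat \<Rightarrow> 'a) \<Rightarrow> real \<Rightarrow> real" where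
  "threshold_prob Val A w \<eta> = measure (run_prob A w) {r. ereal \<eta> \<le> Val (wseq A w r)}"

lemma L_pos_eq_Sup_threshold_prob: "L_pos Val A w = Sup (ereal ` {\<eta>. 0 < threshold_prob Val A w \<eta>})"
  by (simp add: L_pos_def threshold_prob_def setcompr_eq_image)

lemma L_as_eq_Sup_threshold_prob: "L_as Val A w = Sup (ereal ` {\<eta>. threshold_prob Val A w \<eta> = 1})"
  by (simp add: L_as_def threshold_prob_def setcompr_eq_image)

lemma borel_measurable_wseq: "(\<lambda>r. ereal (real_of_rat (wseq A w r n))) \<in> borel_measurable run_space"
proof -
  have "(\<lambda>r. (\<lambda>(q, q'). wt A q (w n) q') (r n, r (Suc n))) \<in> run_space \<rightarrow>\<^sub>M count_space UNIV"
    by (rule measurable_compose[OF measurable_Pair_count_space[OF measurable_run_coordinate measurable_run_coordinate]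
          measurable_count_space])
  then have "(\<lambda>r. wseq A w r n) \<in> run_space \<rightarrow>\<^sub>M count_space UNIV"
    by (simp add: wseq_def)
  then show ?thesis
    by (rule measurable_compose) simp
qed

lemma threshold_event_LimSupV_in_sets: "{r. c \<le> LimSupV (wseq A w r)} \<in> sets run_space"
proof -
  have "(\<lambda>r. LimSupV (wseq A w r)) \<in> borel_measurable run_space"
    unfolding LimSupV_def by (rule borel_measurable_limsup[OF borel_measurable_wseq])
  then have "{r \<in> space run_space. c \<le> LimSupV (wseq A w r)} \<in> sets run_space"
    by measurable
  then show ?thesis
    by simp
qed

lemma threshold_event_LimInfV_in_sets: "{r. c \<le> LimInfV (wseq A w r)} \<in> sets run_space"
proof -
  have "(\<lambda>r. LimInfV (wseq A w r)) \<in> borel_measurable run_space"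
    unfolding LimInfV_def by (rule borel_measurable_liminf[OF borel_measurable_wseq])
  then have "{r \<in> space run_space. c \<le> LimInfV (wseq A w r)} \<in> sets run_space"
    by measurable
  then show ?thesis
    by simp
qed

lemma threshold_prob_antimono:
  assumes "{r. ereal \<eta> \<le> Val (wseq A w r)} \<in> sets run_space" and "\<eta> \<le> \<eta>'"
  shows "threshold_prob Val A w \<eta>' \<le> threshold_prob Val A w \<eta>"
proof -
  interpret prob_space "run_prob A w"
    by (rule prob_space_run_prob)
  have le: "ereal \<eta> \<le> ereal \<eta>'"
    using assms(2) by simp
  show ?thesis
    unfolding threshold_prob_def using assms(1)
    by (intro finite_measure_mono) (auto simp: sets_run_prob dest: order_trans[OF le])
qed

lemma le_LimSupV_product_run_iff:
  fixes A1 A2 :: "'a::finite pwa"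
  assumes wf: "wf_pwa A1" "wf_pwa A2" and r: "\<forall>n. r1 n \<in> states A1" "\<forall>n. r2 n \<in> states A2"
  shows "ereal \<eta> \<le> LimSupV (wseq (product_pwa 1 A1 A2) w (product_run 1 A1 A2 w r1 r2)) \<longleftrightarrow>
    ereal \<eta> \<le> LimSupV (wseq A1 w r1) \<and> ereal \<eta> \<le> LimSupV (wseq A2 w r2)"
proof -
  let ?W = "weight_values 1 A1 A2" and ?x = "wseq A1 w r1" and ?y = "wseq A2 w r2"
  have W: "finite ?W" "?W \<noteq> {}"
    using finite_weight_values[OF wf] weight_values_not_empty by auto
  have x: "?x n \<in> ?W" and y: "?y n \<in> ?W" for n
    using scaled_wseq_in_weight_values[OF r(1), where s=1] scaled_wseq_in_weight_values(2)[OF r(2), where s=1]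
    by simp_all
  have upclosed: "\<eta> \<le> real_of_rat b" if "\<eta> \<le> real_of_rat a" "a \<le> b" for a b
    using that(1) of_rat_less_eq[where 'a=real, THEN iffD2, OF that(2)] by linarith
  have "ereal \<eta> \<le> LimSupV (wseq (product_pwa 1 A1 A2) w (product_run 1 A1 A2 w r1 r2)) \<longleftrightarrow>
      infinite {n. \<eta> \<le> real_of_rat (threshold_merge ?W ?x ?y n)}"
    using threshold_merge_in[OF W] by (simp add: wseq_product_run[OF wf] le_LimSupV_iff[OF _ W(1)])
  also have "\<dots> \<longleftrightarrow> infinite {n. \<eta> \<le> real_of_rat (?x n)} \<and> infinite {n. \<eta> \<le> real_of_rat (?y n)}"
    by (rule infinite_threshold_merge_upclosed_iff[OF W x y]) (fact upclosed)
  also have "\<dots> \<longleftrightarrow> ereal \<eta> \<le> LimSupV ?x \<and> ereal \<eta> \<le> LimSupV ?y"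
    using le_LimSupV_iff[OF x W(1)] le_LimSupV_iff[OF y W(1)] by simp
  finally show ?thesis .
qed

text \<open>With weights negated, \<open>\<eta> \<le> liminf\<close> of a sequence becomes the finiteness of the set of
  times where the negated sequence exceeds \<open>-\<eta>\<close>, an upward closed condition.\<close>

lemma le_LimInfV_product_run_iff:
  fixes A1 A2 :: "'a::finite pwa"
  assumes wf: "wf_pwa A1" "wf_pwa A2" and r: "\<forall>n. r1 n \<in> states A1" "\<forall>n. r2 n \<in> states A2"
  shows "ereal \<eta> \<le> LimInfV (wseq (product_pwa (-1) A1 A2) w (product_run (-1) A1 A2 w r1 r2)) \<longleftrightarrow>
    ereal \<eta> \<le> LimInfV (wseq A1 w r1) \<or> ereal \<eta> \<le> LimInfV (wseq A2 w r2)"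
proof -
  let ?W = "weight_values (-1) A1 A2"
  let ?x = "scaled_weights (-1) A1 w r1" and ?y = "scaled_weights (-1) A2 w r2"
  have W: "finite ?W" "?W \<noteq> {}"
    using finite_weight_values[OF wf] weight_values_not_empty by auto
  have x: "?x n \<in> ?W" and y: "?y n \<in> ?W" for n
    by (rule scaled_wseq_in_weight_values[OF r(1)], rule scaled_wseq_in_weight_values(2)[OF r(2)])
  have "finite (uminus ` ?W)"
    using W by simp
  have upclosed: "- \<eta> < real_of_rat b" if "- \<eta> < real_of_rat a" "a \<le> b" for a b
    using that(1) of_rat_less_eq[where 'a=real, THEN iffD2, OF that(2)] by linarith
  have neg: "\<not> \<eta> \<le> real_of_rat (- t) \<longleftrightarrow> - \<eta> < real_of_rat t" for t
    by (simp add: of_rat_minus) linarith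
  have LimInfV_iff: "ereal \<eta> \<le> LimInfV (\<lambda>n. - z n) \<longleftrightarrow> finite {n. - \<eta> < real_of_rat (z n)}"
    if "\<And>n. z n \<in> ?W" for z
    using le_LimInfV_iff[of "\<lambda>n. - z n" "uminus ` ?W"] that \<open>finite (uminus ` ?W)\<close> by (simp add: neg)
  have "ereal \<eta> \<le> LimInfV (wseq (product_pwa (-1) A1 A2) w (product_run (-1) A1 A2 w r1 r2)) \<longleftrightarrow>
      finite {n. - \<eta> < real_of_rat (threshold_merge ?W ?x ?y n)}"
    using LimInfV_iff[of "threshold_merge ?W ?x ?y", OF threshold_merge_in[OF W]]
    by (simp add: wseq_product_run[OF wf])
  also have "\<dots> \<longleftrightarrow> finite {n. - \<eta> < real_of_rat (?x n)} \<or> finite {n. - \<eta> < real_of_rat (?y n)}"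
  proof -
    have "infinite {n. - \<eta> < real_of_rat (threshold_merge ?W ?x ?y n)} \<longleftrightarrow>
        infinite {n. - \<eta> < real_of_rat (?x n)} \<and> infinite {n. - \<eta> < real_of_rat (?y n)}"
      by (rule infinite_threshold_merge_upclosed_iff[OF W x y]) (fact upclosed)
    then show ?thesis
      by blast
  qed
  also have "\<dots> \<longleftrightarrow> ereal \<eta> \<le> LimInfV (wseq A1 w r1) \<or> ereal \<eta> \<le> LimInfV (wseq A2 w r2)"
    using LimInfV_iff[OF x] LimInfV_iff[OF y] by simp
  finally show ?thesis .
qed

lemma threshold_prob_LimSupV_product_pwa:
  fixes A1 A2 :: "'a::finite pwa"
  assumes wf: "wf_pwa A1" "wf_pwa A2"
  shows "threshold_prob LimSupV (product_pwa 1 A1 A2) w \<eta> =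
    threshold_prob LimSupV A1 w \<eta> * threshold_prob LimSupV A2 w \<eta>"
proof -
  let ?E = "\<lambda>B. {r. ereal \<eta> \<le> LimSupV (wseq B w r)}"
  have "measure (run_prob (product_pwa 1 A1 A2) w) (?E (product_pwa 1 A1 A2)) =
      measure (run_prob A1 w \<Otimes>\<^sub>M run_prob A2 w) (?E A1 \<times> ?E A2)"
    by (rule measure_run_prob_product_pwa[OF wf])
      (auto simp: le_LimSupV_product_run_iff[OF wf] threshold_event_LimSupV_in_sets)
  then show ?thesis
    by (simp add: threshold_prob_def measure_pair_run_prob_Times threshold_event_LimSupV_in_sets)
qed

lemma threshold_prob_LimInfV_product_pwa:
  fixes A1 A2 :: "'a::finite pwa"
  assumes wf: "wf_pwa A1" "wf_pwa A2"
  shows "1 - threshold_prob LimInfV (product_pwa (-1) A1 A2) w \<eta> =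
    (1 - threshold_prob LimInfV A1 w \<eta>) * (1 - threshold_prob LimInfV A2 w \<eta>)"
proof -
  let ?E = "\<lambda>B. {r. ereal \<eta> \<le> LimInfV (wseq B w r)}"
  have compl: "measure (run_prob B w) (UNIV - ?E B) = 1 - threshold_prob LimInfV B w \<eta>" for B :: "'a pwa"
  proof -
    interpret prob_space "run_prob B w"
      by (rule prob_space_run_prob)
    show ?thesis
      using prob_compl[of "?E B"] by (simp add: threshold_prob_def sets_run_prob threshold_event_LimInfV_in_sets)
  qed
  have "measure (run_prob (product_pwa (-1) A1 A2) w) (UNIV - ?E (product_pwa (-1) A1 A2)) =
      measure (run_prob A1 w \<Otimes>\<^sub>M run_prob A2 w) ((UNIV - ?E A1) \<times> (UNIV - ?E A2))"
    by (rule measure_run_prob_product_pwa[OF wf])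
      (auto simp: le_LimInfV_product_run_iff[OF wf] threshold_event_LimInfV_in_sets
        intro!: sets.compl_sets[of _ run_space, simplified])
  then show ?thesis
    by (simp add: compl measure_pair_run_prob_Times threshold_event_LimInfV_in_sets
        sets.compl_sets[of _ run_space, simplified])
qed

lemma Sup_ereal_image_Int_downward_closed:
  fixes D1 D2 :: "real set"
  assumes "\<And>x y. x \<in> D1 \<Longrightarrow> y \<le> x \<Longrightarrow> y \<in> D1" and "\<And>x y. x \<in> D2 \<Longrightarrow> y \<le> x \<Longrightarrow> y \<in> D2"
  shows "Sup (ereal ` (D1 \<inter> D2)) = min (Sup (ereal ` D1)) (Sup (ereal ` D2))"
proof (rule antisym)
  show "Sup (ereal ` (D1 \<inter> D2)) \<le> min (Sup (ereal ` D1)) (Sup (ereal ` D2))"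
    by (intro min.boundedI Sup_subset_mono image_mono) auto
  show "min (Sup (ereal ` D1)) (Sup (ereal ` D2)) \<le> Sup (ereal ` (D1 \<inter> D2))"
  proof (rule dense_le)
    fix x assume "x < min (Sup (ereal ` D1)) (Sup (ereal ` D2))"
    then obtain a b where "a \<in> D1" "x < ereal a" "b \<in> D2" "x < ereal b"
      by (auto simp: less_Sup_iff)
    then have "min a b \<in> D1 \<inter> D2" and "x < ereal (min a b)"
      using assms by (auto simp: min_def)
    then show "x \<le> Sup (ereal ` (D1 \<inter> D2))"
      by (meson Sup_upper image_eqI less_imp_le order_trans)
  qed
qed

lemma L_pos_LimSupV_product_pwa:
  fixes A1 A2 :: "'a::finite pwa"
  assumes wf: "wf_pwa A1" "wf_pwa A2"
  shows "L_pos LimSupV (product_pwa 1 A1 A2) w = min (L_pos LimSupV A1 w) (L_pos LimSupV A2 w)"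
proof -
  let ?p = "\<lambda>B \<eta>. threshold_prob LimSupV B w \<eta>"
  have "{\<eta>. 0 < ?p A1 \<eta> * ?p A2 \<eta>} = {\<eta>. 0 < ?p A1 \<eta>} \<inter> {\<eta>. 0 < ?p A2 \<eta>}"
    by (auto simp: zero_less_mult_iff threshold_prob_def intro: less_le_trans)
  moreover have "0 < ?p B \<eta>" if "0 < ?p B \<eta>'" "\<eta> \<le> \<eta>'" for B :: "'a pwa" and \<eta> \<eta>'
    using that threshold_prob_antimono[OF threshold_event_LimSupV_in_sets] by (meson less_le_trans)
  ultimately show ?thesis
    unfolding L_pos_eq_Sup_threshold_prob threshold_prob_LimSupV_product_pwa[OF wf]
    by (auto intro!: Sup_ereal_image_Int_downward_closed)
qed

lemma L_as_LimInfV_product_pwa: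
  fixes A1 A2 :: "'a::finite pwa"
  assumes wf: "wf_pwa A1" "wf_pwa A2"
  shows "L_as LimInfV (product_pwa (-1) A1 A2) w = max (L_as LimInfV A1 w) (L_as LimInfV A2 w)"
proof -
  have "threshold_prob LimInfV (product_pwa (-1) A1 A2) w \<eta> = 1 \<longleftrightarrow>
      threshold_prob LimInfV A1 w \<eta> = 1 \<or> threshold_prob LimInfV A2 w \<eta> = 1" for \<eta>
    using threshold_prob_LimInfV_product_pwa[OF wf, of w \<eta>] by auto
  then show ?thesis
    unfolding L_as_eq_Sup_threshold_prob by (simp add: Collect_disj_eq image_Un Sup_union_distrib sup_max)
qed

theorem lemma18:
  shows "(\<forall>A1 A2 :: ('a::finite) pwa. wf_pwa A1 \<and> wf_pwa A2 \<longrightarrow>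
            (\<exists>A :: 'a pwa. wf_pwa A \<and> (\<forall>w. L_pos LimSupV A w =
               min (L_pos LimSupV A1 w) (L_pos LimSupV A2 w)))) \<and>
         (\<forall>A1 A2 :: 'a pwa. wf_pwa A1 \<and> wf_pwa A2 \<longrightarrow>
            (\<exists>A :: 'a pwa. wf_pwa A \<and> (\<forall>w. L_as LimInfV A w =
               max (L_as LimInfV A1 w) (L_as LimInfV A2 w))))"
  using wf_product_pwa L_pos_LimSupV_product_pwa L_as_LimInfV_product_pwa by blast

end
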